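(* Let $m\ge1$ be an integer, let $\sigma\in\{+1,-1\}$, and let $\theta_1,\dots,\theta_s\in(\pi/2,\pi)$. Let $\lambda_1,\dots,\lambda_t$ be complex numbers such that: - $\operatorname{Re}(\lambda_j)>0$ and $|\lambda_j|\ne1$ for all $j$; - no two of the $\lambda_j$ are reciprocal to each other; - the multiset $\{\lambda_j\}\cup\{\lambda_j^{-1}\}$ is closed under complex conjugation. Define $$H(z)=\nu\!\left(\sigma\,\beta(\eta(z))^{m}\prod_{k=1}^{s}\beta\!\left(-\frac{\eta(z)}{\cos\theta_k}\right)\prod_{j=1}^{t}\beta\!\left(\frac{\eta(z)}{\eta(\lambda_j)}\right)\right).$$ Then $H$ is a 0-SYM filter, and the only points of the stopband at which $H$ vanishes are $e^{i\theta_k}$ and $e^{-i\theta_k}$ ($k=1,\dots,s$), together with $-1$, which is a zero of multiplicity $2m$. In total these are the $2(m+s)$ values $e^{\pm i\theta_1},\dots,e^{\pm i\theta_s}$ and $-1$ repeated $2m$ times.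
   Context: A 0-SYM filter is a rational function $H(z)$ with real coefficients satisfying $H(z)^2+H(-z)^2=1$ and $H(z)=H(z^{-1})$. The functions used are: - $\beta(z)=\frac{1-z}{1+z}$; - $\eta(z)=\frac{z+z^{-1}}{2}$; - $\nu(z)=\frac{1+\sqrt2\,z}{1+\sqrt2\,z+z^2}$. The stopband is the arc $\{e^{i\xi}:\pi/2<|\xi|\le\pi\}$ of the unit circle. *)

theory Defs
  imports "HOL-Analysis.Analysis" "HOL-Computational_Algebra.Polynomial" "HOL-Library.Multiset"
begin

definition beta :: "complex \<Rightarrow> complex" where
  "beta w = (1 - w) / (1 + w)"

definition eta :: "complex \<Rightarrow> complex" where
  "eta z = (z + inverse z) / 2"

definition nu :: "complex \<Rightarrow> complex" where
  "nu w = (1 + of_real (sqrt 2) * w) / (1 + of_real (sqrt 2) * w + w ^ 2)"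

abbreviation cpoly :: "real poly \<Rightarrow> complex poly" where
  "cpoly p \<equiv> map_poly complex_of_real p"

text \<open>The function H (given pointwise) coincides, as a rational function, with p/q,
  where p, q have real coefficients: equality off a finite set.\<close>
definition rat_repr :: "(complex \<Rightarrow> complex) \<Rightarrow> real poly \<Rightarrow> real poly \<Rightarrow> bool" where
  "rat_repr H p q \<longleftrightarrow> q \<noteq> 0 \<and>
     finite {z. H z \<noteq> poly (cpoly p) z / poly (cpoly q) z}"

text \<open>0-SYM filter: a rational function with real coefficients satisfying
  H(z)^2 + H(-z)^2 = 1 and H(z) = H(1/z) (identities of rational functions,
  i.e. holding outside a finite set of points).\<close>
definition zero_sym :: "(complex \<Rightarrow> complex) \<Rightarrow> bool" where
  "zero_sym H \<longleftrightarrow> (\<exists>p q. rat_repr H p q) \<and>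
     finite {z. H z ^ 2 + H (- z) ^ 2 \<noteq> 1} \<and>
     finite {z. z \<noteq> 0 \<and> H z \<noteq> H (inverse z)}"

definition stopband :: "complex set" where
  "stopband = {cis xi | xi. pi / 2 < \<bar>xi\<bar> \<and> \<bar>xi\<bar> \<le> pi}"

definition Hfilt :: "nat \<Rightarrow> real \<Rightarrow> nat \<Rightarrow> (nat \<Rightarrow> real) \<Rightarrow> nat \<Rightarrow> (nat \<Rightarrow> complex)
    \<Rightarrow> complex \<Rightarrow> complex" where
  "Hfilt m \<sigma> s \<theta> t lam z = nu (of_real \<sigma> * beta (eta z) ^ m
      * (\<Prod>k<s. beta (- eta z / of_real (cos (\<theta> k))))
      * (\<Prod>j<t. beta (eta z / eta (lam j))))"

end

(*
  Write L_a(z) = z^2 - 2 a z + 1 = 2 z (eta z - a). Then beta (eta z / a) = - L_a(z) / L_{-a}(z),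
  so the argument of nu is tau A(z) / B(z) with tau = +-1, A the product of the L_a over a multiset
  of parameters a with Re a > 0, and B(z) = A(-z). Clearing denominators,
  H = B (B + kappa A) / (A^2 + kappa A B + B^2) with kappa = sqrt 2 tau, and kappa^2 = 2 turns
  H(z)^2 + H(-z)^2 = 1 into a polynomial identity; H(1/z) = H(z) because eta (1/z) = eta z.
  A root z of A has Re (eta z) > 0 and a root of B has Re (eta z) < 0, so the representation is
  coprime. On the stopband eta z = Re z < 0, hence |B| <= |A| /= 0 and B + kappa A /= 0 since
  |kappa| > 1: the zeros there are those of B, read off from L_{eta w} = (X - w) (X - 1/w).
*)

theory Submission
  imports Defs "HOL-Computational_Algebra.Fundamental_Theorem_Algebra"
begin

lemma eta_inverse [simp]: "eta (inverse w) = eta w"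
  by (simp add: eta_def add.commute)

lemma eta_minus: "eta (- w) = - eta w"
  by (simp add: eta_def field_simps)

lemma eta_cnj: "eta (cnj w) = cnj (eta w)"
  by (simp add: eta_def)

lemma eta_cis: "eta (cis x) = of_real (cos x)"
  by (simp add: eta_def complex_eq_iff)

lemma eta_unit_circle:
  assumes "cmod z = 1"
  shows "eta z = of_real (Re z)"
proof -
  have "inverse z = cnj z"
    using complex_div_cnj[of 1 z] assms by (simp add: divide_inverse)
  then show ?thesis
    by (simp add: eta_def complex_add_cnj)
qed

lemma Re_eta_pos: "0 < Re w \<Longrightarrow> 0 < Re (eta w)"
  by (simp add: eta_def sum_power2_gt_zero_iff add_pos_pos)

definition eta_poly :: "complex \<Rightarrow> complex poly" where
  "eta_poly a = [:1, - 2 * a, 1:]"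

lemma poly_eta_poly: "poly (eta_poly a) z = z\<^sup>2 - 2 * a * z + 1"
  by (simp add: eta_poly_def algebra_simps power2_eq_square)

lemma eta_poly_nonzero [simp]: "eta_poly a \<noteq> 0"
  by (simp add: eta_poly_def)

lemma poly_eta_poly_0 [simp]: "poly (eta_poly a) 0 = 1"
  by (simp add: poly_eta_poly)

lemma poly_eta_poly_minus: "poly (eta_poly a) (- z) = poly (eta_poly (- a)) z"
  by (simp add: poly_eta_poly)

lemma cnj_poly_eta_poly: "cnj (poly (eta_poly a) (cnj z)) = poly (eta_poly (cnj a)) z"
  by (simp add: poly_eta_poly)

lemma poly_eta_poly_eq: "z \<noteq> 0 \<Longrightarrow> poly (eta_poly a) z = 2 * z * (eta z - a)"
  by (simp add: poly_eta_poly eta_def field_simps power2_eq_square)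

lemma poly_eta_poly_eq_0_iff: "poly (eta_poly a) z = 0 \<longleftrightarrow> z \<noteq> 0 \<and> eta z = a"
  by (cases "z = 0") (auto simp: poly_eta_poly_eq)

lemma eta_poly_eta: "w \<noteq> 0 \<Longrightarrow> eta_poly (eta w) = [:- w, 1:] * [:- inverse w, 1:]"
  by (simp add: eta_poly_def eta_def field_simps)

lemma order_eta_poly_eta:
  assumes "w \<noteq> 0"
  shows "order z (eta_poly (eta w)) = of_bool (z = w) + of_bool (z = inverse w)"
proof -
  have linear: "order z [:- u, 1:] = of_bool (z = u)" for u :: complex
    using order_power_n_n[of u 1] by (auto intro: order_0I)
  have nonzero: "[:- w, 1:] * [:- inverse w, 1:] \<noteq> 0"
    by simp
  show ?thesis
    unfolding eta_poly_eta[OF assms] by (simp only: order_mult[OF nonzero] linear)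
qed

lemma beta_eta_div:
  assumes "z \<noteq> 0" "a \<noteq> 0"
  shows "beta (eta z / a) = - poly (eta_poly a) z / poly (eta_poly (- a)) z"
proof -
  have "beta (eta z / a) = (a - eta z) / (a + eta z)"
    using assms(2) by (simp add: beta_def divide_simps)
  also have "\<dots> = - poly (eta_poly a) z / poly (eta_poly (- a)) z"
    using assms(1) by (simp add: poly_eta_poly_eq divide_simps) (simp add: algebra_simps)
  finally show ?thesis .
qed

lemma stopband_unit_circle: "z \<in> stopband \<Longrightarrow> cmod z = 1"
  by (auto simp: stopband_def)

lemma stopband_Re_neg:
  assumes "z \<in> stopband"
  shows "Re z < 0"
proof -
  obtain x where "z = cis x" "pi / 2 < \<bar>x\<bar>" "\<bar>x\<bar> \<le> pi"
    using assms by (auto simp: stopband_def)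
  moreover have "cos \<bar>x\<bar> < 0"
    using calculation by (intro cos_lt_zero_pi) auto
  ultimately show ?thesis
    by simp
qed

lemma norm_poly_eta_poly_minus_le:
  assumes "cmod z = 1" "Re z < 0" "0 < Re a"
  shows "cmod (poly (eta_poly (- a)) z) \<le> cmod (poly (eta_poly a) z)"
proof -
  have "z \<noteq> 0"
    using assms(1) by auto
  have "cmod (of_real (Re z) + a) \<le> cmod (of_real (Re z) - a)"
    unfolding cmod_def using assms(2,3) mult_pos_neg[of "Re a" "Re z"]
    by (intro real_sqrt_le_mono) (simp add: power2_eq_square algebra_simps)
  then show ?thesis
    using \<open>z \<noteq> 0\<close> by (simp add: poly_eta_poly_eq eta_unit_circle[OF assms(1)] norm_mult)
qed

definition eta_prod :: "complex multiset \<Rightarrow> complex poly" where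
  "eta_prod R = (\<Prod>a\<in>#R. eta_poly a)"

lemma eta_prod_empty [simp]: "eta_prod {#} = 1"
  by (simp add: eta_prod_def)

lemma eta_prod_add_mset [simp]: "eta_prod (add_mset a R) = eta_poly a * eta_prod R"
  by (simp add: eta_prod_def)

lemma poly_eta_prod: "poly (eta_prod R) z = (\<Prod>a\<in>#R. poly (eta_poly a) z)"
  by (simp add: eta_prod_def poly_prod_mset)

lemma eta_prod_nonzero [simp]: "eta_prod R \<noteq> 0"
  by (induction R) simp_all

lemma poly_eta_prod_0 [simp]: "poly (eta_prod R) 0 = 1"
  by (simp add: poly_eta_prod)

lemma poly_eta_prod_minus: "poly (eta_prod R) (- z) = poly (eta_prod (image_mset uminus R)) z"
  by (simp add: poly_eta_prod poly_eta_poly_minus image_mset.compositionality o_def)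

lemma poly_eta_prod_eq_0_iff: "poly (eta_prod R) z = 0 \<longleftrightarrow> z \<noteq> 0 \<and> eta z \<in># R"
  by (auto simp: poly_eta_prod poly_eta_poly_eq_0_iff)

lemma order_eta_prod: "order z (eta_prod R) = (\<Sum>a\<in>#R. order z (eta_poly a))"
  by (induction R) (simp_all add: order_mult)

lemma map_poly_cnj_eta_prod: "map_poly cnj (eta_prod R) = eta_prod (image_mset cnj R)"
proof (rule poly_eq_poly_eq_iff[THEN iffD1], rule ext)
  show "poly (map_poly cnj (eta_prod R)) z = poly (eta_prod (image_mset cnj R)) z" for z
    by (induction R) (simp_all add: poly_eta_prod cnj_poly_eta_poly)
qed

lemma prod_beta_eta_div:
  assumes "0 \<notin># R" "z \<noteq> 0"
  shows "(\<Prod>a\<in>#R. beta (eta z / a)) =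
    (- 1) ^ size R * poly (eta_prod R) z / poly (eta_prod (image_mset uminus R)) z"
  using assms(1)
proof (induction R)
  case (add a R)
  then show ?case
    using assms(2) by (simp add: poly_eta_prod beta_eta_div)
qed simp

lemma norm_poly_eta_prod_minus_le:
  assumes "cmod z = 1" "Re z < 0" "\<forall>a\<in>#R. 0 < Re a"
  shows "cmod (poly (eta_prod (image_mset uminus R)) z) \<le> cmod (poly (eta_prod R) z)"
  using assms(3)
proof (induction R)
  case (add a R)
  then show ?case
    using norm_poly_eta_poly_minus_le[OF assms(1,2), of a]
    by (simp add: poly_eta_prod norm_mult mult_mono)
qed simp

lemma nu_scaled_ratio:
  fixes a b \<tau> :: complex
  assumes "\<tau>\<^sup>2 = 1" "b \<noteq> 0"
  shows "nu (\<tau> * a / b) =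
    b * (b + sqrt 2 * \<tau> * a) / (a\<^sup>2 + sqrt 2 * \<tau> * a * b + b\<^sup>2)"
proof -
  let ?w = "\<tau> * a / b"
  have "nu ?w = b\<^sup>2 * (1 + sqrt 2 * ?w) / (b\<^sup>2 * (1 + sqrt 2 * ?w + ?w\<^sup>2))"
    unfolding nu_def using assms(2) by simp
  also have "b\<^sup>2 * (1 + sqrt 2 * ?w) = b * (b + sqrt 2 * \<tau> * a)"
    using assms(2) by (simp add: field_simps power2_eq_square)
  also have "b\<^sup>2 * (1 + sqrt 2 * ?w + ?w\<^sup>2) = a\<^sup>2 + sqrt 2 * \<tau> * a * b + b\<^sup>2"
    using assms by (simp add: field_simps power2_eq_square power_mult_distrib)
  finally show ?thesis .
qed

lemma complementary_squares:
  fixes a b \<kappa> :: "'a::comm_ring_1"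
  assumes "\<kappa>\<^sup>2 = 2"
  shows "(b * (b + \<kappa> * a))\<^sup>2 + (a * (a + \<kappa> * b))\<^sup>2 = (a\<^sup>2 + \<kappa> * a * b + b\<^sup>2)\<^sup>2"
proof -
  have "(b * (b + \<kappa> * a))\<^sup>2 + (a * (a + \<kappa> * b))\<^sup>2
      = (a\<^sup>2 + \<kappa> * a * b + b\<^sup>2)\<^sup>2 + (\<kappa>\<^sup>2 - 2) * (a * b)\<^sup>2"
    by (simp add: power2_eq_square algebra_simps)
  then show ?thesis
    using assms by simp
qed

lemma common_zero_imp_zero:
  fixes a b \<kappa> :: "'a::idom"
  assumes "b * (b + \<kappa> * a) = 0" "a\<^sup>2 + \<kappa> * a * b + b\<^sup>2 = 0"
  shows "a = 0 \<and> b = 0"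
proof -
  have "a\<^sup>2 = 0"
    using assms by (simp add: algebra_simps power2_eq_square)
  then show ?thesis
    using assms(2) by simp
qed

lemma add_mult_nonzero_of_norm_le:
  fixes a b \<kappa> :: complex
  assumes "cmod b \<le> cmod a" "a \<noteq> 0" "1 < cmod \<kappa>"
  shows "b + \<kappa> * a \<noteq> 0"
proof
  assume "b + \<kappa> * a = 0"
  then have "cmod b = cmod \<kappa> * cmod a"
    by (simp add: eq_neg_iff_add_eq_0[symmetric] norm_mult)
  moreover have "cmod a < cmod \<kappa> * cmod a"
    using assms(2,3) by simp
  ultimately show False
    using assms(1) by simp
qed

lemma cpoly_mult: "cpoly (p * q) = cpoly p * cpoly q"
  by (rule poly_eqI) (simp add: coeff_mult coeff_map_poly)

lemma cpoly_map_poly_Re: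
  assumes "map_poly cnj P = P"
  shows "cpoly (map_poly Re P) = P"
proof (rule poly_eqI)
  fix n
  have "cnj (coeff P n) = coeff P n"
    by (metis assms coeff_map_poly complex_cnj_zero)
  then show "coeff (cpoly (map_poly Re P)) n = coeff P n"
    by (simp add: coeff_map_poly complex_eq_iff)
qed

lemma coprime_of_no_common_complex_root:
  fixes p q :: "real poly"
  assumes "q \<noteq> 0" "\<And>z. poly (cpoly p) z = 0 \<Longrightarrow> poly (cpoly q) z \<noteq> 0"
  shows "coprime p q"
proof (rule coprimeI)
  fix g
  assume g: "g dvd p" "g dvd q"
  then have "g \<noteq> 0"
    using assms(1) by auto
  show "is_unit g"
  proof (rule ccontr)
    assume "\<not> is_unit g"
    then have "\<not> constant (poly (cpoly g))"
      using \<open>g \<noteq> 0\<close> by (simp add: constant_degree degree_map_poly is_unit_iff_degree)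
    then obtain z where "poly (cpoly g) z = 0"
      using fundamental_theorem_of_algebra by blast
    moreover obtain p' q' where "p = g * p'" "q = g * q'"
      using g by (meson dvdE)
    ultimately show False
      using assms(2)[of z] by (simp add: cpoly_mult)
  qed
qed

section \<open>Filters built from a parameter multiset\<close>

locale eta_product_filter =
  fixes \<sigma> :: real and R :: "complex multiset"
  assumes abs_sign: "\<bar>\<sigma>\<bar> = 1"
    and Re_pos: "\<And>a. a \<in># R \<Longrightarrow> 0 < Re a"
    and cnj_closed: "image_mset cnj R = R"
begin

definition H :: "complex \<Rightarrow> complex" where
  "H z = nu (of_real \<sigma> * (\<Prod>a\<in>#R. beta (eta z / a)))"

abbreviation A :: "complex poly" where
  "A \<equiv> eta_prod R"

abbreviation B :: "complex poly" where
  "B \<equiv> eta_prod (image_mset uminus R)"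

definition \<tau> :: complex where
  "\<tau> = of_real \<sigma> * (- 1) ^ size R"

definition \<kappa> :: complex where
  "\<kappa> = sqrt 2 * \<tau>"

definition P :: "complex poly" where
  "P = B * (B + smult \<kappa> A)"

definition Q :: "complex poly" where
  "Q = A\<^sup>2 + smult \<kappa> (A * B) + B\<^sup>2"

lemma \<tau>_squared: "\<tau>\<^sup>2 = 1"
proof -
  have "\<sigma>\<^sup>2 = 1"
    using abs_sign by (metis abs_power2 power2_abs power_one)
  then have "(of_real \<sigma> :: complex)\<^sup>2 = 1"
    by (metis of_real_1 of_real_power)
  moreover have "((- 1 :: complex) ^ size R)\<^sup>2 = 1"
    by (simp add: power_mult[symmetric])
  ultimately show ?thesis
    by (simp add: \<tau>_def power_mult_distrib)
qed

lemma \<kappa>_squared: "\<kappa>\<^sup>2 = 2"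
proof -
  have "(complex_of_real (sqrt 2))\<^sup>2 = 2"
    by (metis of_real_numeral of_real_power real_sqrt_pow2 zero_le_numeral)
  then show ?thesis
    using \<tau>_squared by (simp add: \<kappa>_def power_mult_distrib)
qed

lemma norm_\<kappa>: "cmod \<kappa> = sqrt 2"
  using abs_sign by (simp add: \<kappa>_def \<tau>_def norm_mult norm_power)

lemma cnj_\<kappa>: "cnj \<kappa> = \<kappa>"
  by (simp add: \<kappa>_def \<tau>_def)

lemma poly_P: "poly P z = poly B z * (poly B z + \<kappa> * poly A z)"
  by (simp add: P_def)

lemma poly_Q: "poly Q z = (poly A z)\<^sup>2 + \<kappa> * poly A z * poly B z + (poly B z)\<^sup>2"
  by (simp add: Q_def)

lemma poly_A_minus: "poly A (- z) = poly B z"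
  by (rule poly_eta_prod_minus)

lemma poly_B_minus: "poly B (- z) = poly A z"
  by (simp add: poly_eta_prod_minus image_mset.compositionality o_def)

lemma H_eq:
  assumes "z \<noteq> 0" "poly B z \<noteq> 0"
  shows "H z = poly P z / poly Q z"
proof -
  have "0 \<notin># R"
    using Re_pos by fastforce
  then have "H z = nu (\<tau> * poly A z / poly B z)"
    using assms(1) by (simp add: H_def prod_beta_eta_div \<tau>_def mult.assoc)
  also have "\<dots> = poly P z / poly Q z"
    using nu_scaled_ratio[OF \<tau>_squared assms(2)] by (simp add: poly_P poly_Q \<kappa>_def mult.assoc)
  finally show ?thesis .
qed


lemma P_nonzero: "P \<noteq> 0"
proof
  assume "P = 0"
  then have "\<kappa> = - 1"
    using poly_P[of 0] by (simp add: add_eq_0_iff)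
  then show False
    using \<kappa>_squared by simp
qed

lemma Q_nonzero: "Q \<noteq> 0"
proof
  assume "Q = 0"
  then have "\<kappa> = - 2"
    using poly_Q[of 0] by (simp add: add_eq_0_iff)
  then show False
    using \<kappa>_squared by simp
qed

lemma map_poly_cnj_A: "map_poly cnj A = A"
  by (simp add: map_poly_cnj_eta_prod cnj_closed)

lemma map_poly_cnj_B: "map_poly cnj B = B"
proof -
  have "image_mset cnj (image_mset uminus R) = image_mset uminus (image_mset cnj R)"
    by (simp add: image_mset.compositionality o_def)
  then show ?thesis
    by (simp only: map_poly_cnj_eta_prod cnj_closed)
qed

lemma cnj_poly_A: "cnj (poly A (cnj z)) = poly A z"
  by (metis poly_map_poly_cnj map_poly_cnj_A)

lemma cnj_poly_B: "cnj (poly B (cnj z)) = poly B z"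
  by (metis poly_map_poly_cnj map_poly_cnj_B)

lemma map_poly_cnj_P: "map_poly cnj P = P"
  by (rule poly_eq_poly_eq_iff[THEN iffD1])
    (simp add: fun_eq_iff poly_P cnj_poly_A cnj_poly_B cnj_\<kappa>)

lemma map_poly_cnj_Q: "map_poly cnj Q = Q"
  by (rule poly_eq_poly_eq_iff[THEN iffD1])
    (simp add: fun_eq_iff poly_Q cnj_poly_A cnj_poly_B cnj_\<kappa>)

lemma map_poly_Re_P_nonzero: "map_poly Re P \<noteq> 0"
  using P_nonzero cpoly_map_poly_Re[OF map_poly_cnj_P] by auto

lemma map_poly_Re_Q_nonzero: "map_poly Re Q \<noteq> 0"
  using Q_nonzero cpoly_map_poly_Re[OF map_poly_cnj_Q] by auto

lemma rat_repr_H: "rat_repr H (map_poly Re P) (map_poly Re Q)"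
proof -
  have "{z. H z \<noteq> poly P z / poly Q z} \<subseteq> insert 0 {z. poly B z = 0}"
    using H_eq by auto
  moreover have "finite (insert 0 {z. poly B z = 0})"
    by (simp add: poly_roots_finite)
  ultimately show ?thesis
    unfolding rat_repr_def cpoly_map_poly_Re[OF map_poly_cnj_P] cpoly_map_poly_Re[OF map_poly_cnj_Q]
    using map_poly_Re_Q_nonzero by (auto intro: finite_subset)
qed

lemma H_complementary: "finite {z. (H z)\<^sup>2 + (H (- z))\<^sup>2 \<noteq> 1}"
proof (rule finite_subset)
  show "finite ({0} \<union> {z. poly A z = 0} \<union> {z. poly B z = 0} \<union> {z. poly Q z = 0})"
    using Q_nonzero by (simp add: poly_roots_finite)
  show "{z. (H z)\<^sup>2 + (H (- z))\<^sup>2 \<noteq> 1}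
      \<subseteq> {0} \<union> {z. poly A z = 0} \<union> {z. poly B z = 0} \<union> {z. poly Q z = 0}"
  proof (rule subsetI, rule ccontr)
    fix z
    assume z: "z \<in> {z. (H z)\<^sup>2 + (H (- z))\<^sup>2 \<noteq> 1}"
      and "z \<notin> {0} \<union> {z. poly A z = 0} \<union> {z. poly B z = 0} \<union> {z. poly Q z = 0}"
    then have nonzero: "z \<noteq> 0" "poly A z \<noteq> 0" "poly B z \<noteq> 0" "poly Q z \<noteq> 0"
      by auto
    define a b where "a = poly A z" and "b = poly B z"
    have Q_eq: "poly Q z = a\<^sup>2 + \<kappa> * a * b + b\<^sup>2" "poly Q (- z) = poly Q z"
      by (simp_all add: a_def b_def poly_Q poly_A_minus poly_B_minus algebra_simps)
    have "H z = b * (b + \<kappa> * a) / poly Q z"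
      using H_eq[of z] nonzero by (simp add: poly_P a_def b_def)
    moreover have "H (- z) = a * (a + \<kappa> * b) / poly Q z"
      using H_eq[of "- z"] nonzero Q_eq(2) by (simp add: poly_P poly_A_minus poly_B_minus a_def b_def)
    ultimately have "(H z)\<^sup>2 + (H (- z))\<^sup>2 = (a\<^sup>2 + \<kappa> * a * b + b\<^sup>2)\<^sup>2 / (poly Q z)\<^sup>2"
      by (simp only: power_divide add_divide_distrib[symmetric] complementary_squares[OF \<kappa>_squared])
    then have "(H z)\<^sup>2 + (H (- z))\<^sup>2 = 1"
      using nonzero(4) by (simp only: Q_eq(1)[symmetric]) simp
    then show False
      using z by simp
  qed
qed

lemma H_inverse: "H (inverse z) = H z"
  by (simp add: H_def)

lemma zero_sym_H: "zero_sym H"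
  unfolding zero_sym_def
proof (intro conjI)
  show "\<exists>p q. rat_repr H p q"
    using rat_repr_H by blast
  show "finite {z. z \<noteq> 0 \<and> H z \<noteq> H (inverse z)}"
    by (simp add: H_inverse)
qed (rule H_complementary)

lemma no_common_root_A_B:
  assumes "poly A z = 0"
  shows "poly B z \<noteq> 0"
proof
  assume "poly B z = 0"
  then obtain a where "a \<in># R" "eta z = - a"
    by (auto simp: poly_eta_prod_eq_0_iff)
  moreover have "eta z \<in># R"
    using assms by (simp add: poly_eta_prod_eq_0_iff)
  ultimately show False
    using Re_pos[of a] Re_pos[of "eta z"] by simp
qed

lemma coprime_P_Q: "coprime (map_poly Re P) (map_poly Re Q)"
proof (rule coprime_of_no_common_complex_root[OF map_poly_Re_Q_nonzero])
  fix z
  assume "poly (cpoly (map_poly Re P)) z = 0"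
  then have "poly B z * (poly B z + \<kappa> * poly A z) = 0"
    by (simp add: cpoly_map_poly_Re[OF map_poly_cnj_P] poly_P)
  moreover have "poly (cpoly (map_poly Re Q)) z
      = (poly A z)\<^sup>2 + \<kappa> * poly A z * poly B z + (poly B z)\<^sup>2"
    by (simp add: cpoly_map_poly_Re[OF map_poly_cnj_Q] poly_Q)
  ultimately show "poly (cpoly (map_poly Re Q)) z \<noteq> 0"
    using common_zero_imp_zero no_common_root_A_B by metis
qed

lemma poly_A_stopband_nonzero:
  assumes "z \<in> stopband"
  shows "poly A z \<noteq> 0"
  using Re_pos stopband_Re_neg[OF assms]
  by (force simp: poly_eta_prod_eq_0_iff eta_unit_circle[OF stopband_unit_circle[OF assms]])

lemma order_P_stopband:
  assumes "z \<in> stopband"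
  shows "order z P = order z B"
proof -
  have "cmod (poly B z) \<le> cmod (poly A z)"
    using norm_poly_eta_prod_minus_le[OF stopband_unit_circle[OF assms] stopband_Re_neg[OF assms]] Re_pos
    by blast
  then have "poly (B + smult \<kappa> A) z \<noteq> 0"
    using add_mult_nonzero_of_norm_le poly_A_stopband_nonzero[OF assms] by (simp add: norm_\<kappa>)
  then show ?thesis
    using P_nonzero by (simp add: P_def order_mult order_0I)
qed

lemma order_numerator_stopband:
  assumes "z \<in> stopband"
  shows "order z (cpoly (map_poly Re P)) = (\<Sum>a\<in>#R. order z (eta_poly (- a)))"
  by (simp add: cpoly_map_poly_Re[OF map_poly_cnj_P] order_P_stopband[OF assms] order_eta_prod
      image_mset.compositionality o_def)

end

lemma image_mset_eta_cnj_closed: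
  assumes "image_mset cnj (M + image_mset inverse M) = M + image_mset inverse M"
  shows "image_mset cnj (image_mset eta M) = image_mset eta M"
proof -
  have "image_mset eta (image_mset cnj (M + image_mset inverse M))
      = image_mset eta (M + image_mset inverse M)"
    using assms by simp
  then have "image_mset cnj (image_mset eta M) + image_mset cnj (image_mset eta M)
      = image_mset eta M + image_mset eta M"
    by (simp add: image_mset.compositionality o_def eta_cnj)
  then have doubled: "count (image_mset cnj (image_mset eta M)) a
      + count (image_mset cnj (image_mset eta M)) a
      = count (image_mset eta M) a + count (image_mset eta M) a" for a
    by (metis count_union)
  have "count (image_mset cnj (image_mset eta M)) a = count (image_mset eta M) a" for a
    using doubled[of a] by linarith
  then show ?thesis
    by (rule multiset_eqI)
qed

(* The parameters a for which every factor of Hfilt reads beta (eta z / a). *)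
definition Hfilt_params :: "nat \<Rightarrow> nat \<Rightarrow> (nat \<Rightarrow> real) \<Rightarrow> nat \<Rightarrow> (nat \<Rightarrow> complex) \<Rightarrow> complex multiset"
  where "Hfilt_params m s \<theta> t lam = replicate_mset m 1
    + image_mset (\<lambda>k. - of_real (cos (\<theta> k))) (mset_set {..<s})
    + image_mset (\<lambda>j. eta (lam j)) (mset_set {..<t})"

lemma Hfilt_eq_prod:
  "Hfilt m \<sigma> s \<theta> t lam z = nu (of_real \<sigma> * (\<Prod>a\<in>#Hfilt_params m s \<theta> t lam. beta (eta z / a)))"
  by (simp add: Hfilt_def Hfilt_params_def prod_unfold_prod_mset image_mset.compositionality o_def
      mult.assoc)

lemma order_Hfilt_params_stopband:
  assumes "z \<in> stopband" "\<forall>j<t. 0 < Re (lam j) \<and> cmod (lam j) \<noteq> 1"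
  shows "(\<Sum>a\<in>#Hfilt_params m s \<theta> t lam. order z (eta_poly (- a))) =
    (if z = - 1 then 2 * m else 0)
    + card {k. k < s \<and> z = cis (\<theta> k)} + card {k. k < s \<and> z = cis (- \<theta> k)}"
proof -
  have "cmod z = 1"
    using stopband_unit_circle[OF assms(1)] .
  have minus_one: "order z (eta_poly (- 1)) = (if z = - 1 then 2 else 0)"
    using order_eta_poly_eta[of "- 1" z] by (simp add: eta_def)
  have cos: "order z (eta_poly (of_real (cos x))) = of_bool (z = cis x) + of_bool (z = cis (- x))" for x
    using order_eta_poly_eta[of "cis x" z] by (simp add: eta_cis)
  have lam: "order z (eta_poly (- eta (lam j))) = 0" if "j < t" for j
  proof -
    have "lam j \<noteq> 0" "cmod (lam j) \<noteq> 1"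
      using assms(2) that by auto
    then have "z \<noteq> - lam j" "z \<noteq> inverse (- lam j)"
      using \<open>cmod z = 1\<close> by (auto simp: norm_inverse)
    then show ?thesis
      using order_eta_poly_eta[of "- lam j" z] \<open>lam j \<noteq> 0\<close> by (simp add: eta_minus)
  qed
  have "(\<Sum>a\<in>#Hfilt_params m s \<theta> t lam. order z (eta_poly (- a)))
      = m * order z (eta_poly (- 1)) + (\<Sum>k<s. order z (eta_poly (of_real (cos (\<theta> k)))))
        + (\<Sum>j<t. order z (eta_poly (- eta (lam j))))"
    by (simp add: Hfilt_params_def sum_unfold_sum_mset image_mset.compositionality o_def)
  also have "\<dots> = (if z = - 1 then 2 * m else 0)
      + card {k. k < s \<and> z = cis (\<theta> k)} + card {k. k < s \<and> z = cis (- \<theta> k)}"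
    by (simp add: minus_one cos lam sum.distrib Int_def)
  finally show ?thesis .
qed

theorem corollary3:
  fixes m s t :: nat and \<sigma> :: real and \<theta> :: "nat \<Rightarrow> real" and lam :: "nat \<Rightarrow> complex"
  assumes "m \<ge> 1"
    and "\<sigma> \<in> {1, -1}"
    and "\<forall>k<s. pi / 2 < \<theta> k \<and> \<theta> k < pi"
    and "\<forall>j<t. Re (lam j) > 0 \<and> cmod (lam j) \<noteq> 1"
    and "\<forall>i<t. \<forall>j<t. i \<noteq> j \<longrightarrow> lam i * lam j \<noteq> 1"
    and "image_mset cnj (image_mset lam (mset [0..<t]) + image_mset (\<lambda>j. inverse (lam j)) (mset [0..<t]))
         = image_mset lam (mset [0..<t]) + image_mset (\<lambda>j. inverse (lam j)) (mset [0..<t])"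
  shows "zero_sym (Hfilt m \<sigma> s \<theta> t lam) \<and>
    (\<exists>p q. rat_repr (Hfilt m \<sigma> s \<theta> t lam) p q \<and> coprime p q \<and> p \<noteq> 0 \<and>
       (\<forall>z\<in>stopband. order z (cpoly p) =
          (if z = -1 then 2 * m else 0)
          + card {k. k < s \<and> z = cis (\<theta> k)} + card {k. k < s \<and> z = cis (- \<theta> k)}))"
proof -
  let ?R = "Hfilt_params m s \<theta> t lam"
  have "image_mset cnj (image_mset (\<lambda>j. eta (lam j)) (mset_set {..<t}))
      = image_mset (\<lambda>j. eta (lam j)) (mset_set {..<t})"
    using image_mset_eta_cnj_closed[of "image_mset lam (mset [0..<t])"] assms(6)
    by (simp add: image_mset.compositionality o_def mset_set_upto_eq_mset_upto)
  then have cnj_closed: "image_mset cnj ?R = ?R"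
    by (simp add: Hfilt_params_def image_mset.compositionality o_def)
  have "cos (\<theta> k) < 0" if "k < s" for k
    using assms(3) that by (intro cos_lt_zero_pi) auto
  then have Re_pos: "0 < Re a" if "a \<in># ?R" for a
    using that assms(4) by (auto simp: Hfilt_params_def Re_eta_pos split: if_splits)
  interpret eta_product_filter \<sigma> ?R
    using assms(2) Re_pos cnj_closed by unfold_locales auto
  have Hfilt_eq: "Hfilt m \<sigma> s \<theta> t lam = H"
    by (simp add: fun_eq_iff H_def Hfilt_eq_prod)
  have order_numerator: "order z (cpoly (map_poly Re P)) = (if z = -1 then 2 * m else 0)
      + card {k. k < s \<and> z = cis (\<theta> k)} + card {k. k < s \<and> z = cis (- \<theta> k)}"
    if "z \<in> stopband" for z
    using order_numerator_stopband[OF that] order_Hfilt_params_stopband[OF that assms(4)] by simp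
  show ?thesis
    unfolding Hfilt_eq
    using zero_sym_H rat_repr_H coprime_P_Q map_poly_Re_P_nonzero order_numerator by blast
qed

end
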